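(* Let $h$ be a positive integer and $L$ an $h$-modular lattice with zero. For every $x\in\mathcal{A}'$ and every integer $k\geq d(x)$, $x^{(k)}=x^{(d(x))}$.
   Context: $K$ is the lattice consisting of $\varnothing$, $C=\{c\}$, $A_m=\{a_k:k\geq m\}$, $B_n=\{b_k:k\geq n\}$ ($m,n<\omega$), and $C\cup A_m\cup B_n$ with $|m-n|\leq1$, ordered by inclusion; $a_n,b_n,c$ denote $A_n,B_n,C$, so $\mathrm{J}(K)=\{c\}\cup\{a_n\}\cup\{b_n\}$ with $a_0>a_1>\cdots$, $b_0>b_1>\cdots$ and no other comparabilities. $\mathcal{A}$ is the set of antitone maps $x\colon\mathrm{J}(K)\to L$ with finite range. For $x\in\mathcal{A}$, $x(a_\infty)$, $x(b_\infty)$ are the eventual values of the increasing sequences $(x(a_n))$, $(x(b_n))$, and $d(x)$ is the least $d\geq0$ with $x(a_n)=x(a_\infty)$ and $x(b_n)=x(b_\infty)$ for all $n\geq d$. The map $x^{(1)}$ is defined by $x^{(1)}(c)=x(c)\vee(x(a_\infty)\wedge x(b_\infty))$, $x^{(1)}(a_0)=x(a_0)$, $x^{(1)}(b_0)=x(b_0)$, $x^{(1)}(a_{n+1})=x(a_{n+1})\vee(x(b_n)\wedge x(c))$, $x^{(1)}(b_{n+1})=x(b_{n+1})\vee(x(a_n)\wedge x(c))$; $\mathcal{A}$ is closed under $x\mapsto x^{(1)}$, and $x^{(0)}=x$, $x^{(k+1)}=(x^{(k)})^{(1)}$. Put $\ell(x)=\langle x(a_\infty),x(b_\infty),x(c)\rangle$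 and $\mathcal{A}'=\{x\in\mathcal{A}:\ell(x^{(1)})=\ell(x)\}$. $L$ is $h$-modular if $u^{(h+1)}=u^{(h)}$ for all $u\in L^3$, where $\langle x,y,z\rangle^{(1)}=\langle x\vee(y\wedge z),y\vee(x\wedge z),z\vee(x\wedge y)\rangle$. *)

theory Defs
  imports Main
begin

text \<open>Join-irreducibles of K: c, a_n, b_n.\<close>
datatype J = Jc | Ja nat | Jb nat

fun leJ :: "J \<Rightarrow> J \<Rightarrow> bool" where
  "leJ Jc Jc = True"
| "leJ (Ja m) (Ja n) = (n \<le> m)"
| "leJ (Jb m) (Jb n) = (n \<le> m)"
| "leJ _ _ = False"

definition antitoneJ :: "(J \<Rightarrow> 'a::order) \<Rightarrow> bool" where
  "antitoneJ x \<longleftrightarrow> (\<forall>p q. leJ p q \<longrightarrow> x q \<le> x p)"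

definition calA :: "(J \<Rightarrow> 'a::lattice) \<Rightarrow> bool" where
  "calA x \<longleftrightarrow> antitoneJ x \<and> finite (range x)"

definition ainf :: "(J \<Rightarrow> 'a) \<Rightarrow> 'a" where
  "ainf x = (THE v. \<exists>N. \<forall>n\<ge>N. x (Ja n) = v)"

definition binf :: "(J \<Rightarrow> 'a) \<Rightarrow> 'a" where
  "binf x = (THE v. \<exists>N. \<forall>n\<ge>N. x (Jb n) = v)"

definition dx :: "(J \<Rightarrow> 'a) \<Rightarrow> nat" where
  "dx x = (LEAST d. \<forall>n\<ge>d. x (Ja n) = ainf x \<and> x (Jb n) = binf x)"

fun step1 :: "(J \<Rightarrow> 'a::lattice) \<Rightarrow> J \<Rightarrow> 'a" where
  "step1 x Jc = sup (x Jc) (inf (ainf x) (binf x))"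
| "step1 x (Ja 0) = x (Ja 0)"
| "step1 x (Jb 0) = x (Jb 0)"
| "step1 x (Ja (Suc n)) = sup (x (Ja (Suc n))) (inf (x (Jb n)) (x Jc))"
| "step1 x (Jb (Suc n)) = sup (x (Jb (Suc n))) (inf (x (Ja n)) (x Jc))"

definition iterJ :: "nat \<Rightarrow> (J \<Rightarrow> 'a::lattice) \<Rightarrow> J \<Rightarrow> 'a" where
  "iterJ k x = (step1 ^^ k) x"

definition ell :: "(J \<Rightarrow> 'a) \<Rightarrow> 'a \<times> 'a \<times> 'a" where
  "ell x = (ainf x, binf x, x Jc)"

definition calA' :: "(J \<Rightarrow> 'a::lattice) \<Rightarrow> bool" where
  "calA' x \<longleftrightarrow> calA x \<and> ell (step1 x) = ell x"

fun tstep :: "'a::lattice \<times> 'a \<times> 'a \<Rightarrow> 'a \<times> 'a \<times> 'a" where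
  "tstep (x, y, z) = (sup x (inf y z), sup y (inf x z), sup z (inf x y))"

definition hmodular :: "'a::lattice itself \<Rightarrow> nat \<Rightarrow> bool" where
  "hmodular _ h \<longleftrightarrow> (\<forall>u::'a \<times> 'a \<times> 'a. (tstep ^^ (h + 1)) u = (tstep ^^ h) u)"

end

theory Submission
  imports Defs
begin

text \<open>
  Write \<alpha>, \<beta>, \<gamma> for the components of l(x). Computing l(x^(1)) shows that x \<in> A' means
  exactly \<open>\<beta> \<sqinter> \<gamma> \<le> \<alpha>\<close>, \<open>\<alpha> \<sqinter> \<gamma> \<le> \<beta>\<close> and \<open>\<alpha> \<sqinter> \<beta> \<le> \<gamma>\<close>. These inequalities make the
  following shape invariant under x \<mapsto> x^(1): the value at c is \<gamma>, the a- and b-values are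
  bounded by \<alpha> and \<beta>, and they equal \<alpha> and \<beta> from index d(x) on. With the value at c
  frozen, the values of x^(k) at a_n and b_n no longer change once k \<ge> n, because the step
  at index n+1 only adds a term that was already added one step earlier. Hence nothing
  changes after step d(x).
\<close>

lemma mono_finite_range_eventually_const:
  fixes f :: "nat \<Rightarrow> 'a::order"
  assumes "mono f" and "finite (range f)"
  shows "\<exists>N. \<forall>n\<ge>N. f n = f N"
proof -
  define N where "N = Max (inv f ` range f)"
  have "f n = f N" if "N \<le> n" for n
  proof -
    define i where "i = inv f (f n)"
    have "f i = f n" unfolding i_def by (meson f_inv_into_f rangeI)
    moreover have "i \<le> N"
      unfolding N_def i_def using \<open>finite (range f)\<close> by (intro Max_ge) auto
    ultimately show ?thesis
      using \<open>mono f\<close> \<open>N \<le> n\<close> by (metis monoD order.antisym)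
  qed
  then show ?thesis by blast
qed

lemma The_eventual_value:
  fixes f :: "nat \<Rightarrow> 'a"
  assumes "\<forall>n\<ge>N. f n = v"
  shows "(THE v. \<exists>N. \<forall>n\<ge>N. f n = v) = v"
proof (rule the_equality)
  show "\<exists>N. \<forall>n\<ge>N. f n = v" using assms by blast
next
  fix w assume "\<exists>N. \<forall>n\<ge>N. f n = w"
  then obtain N' where "\<forall>n\<ge>N'. f n = w" by blast
  then have "f (max N N') = w" by (meson max.cobounded2)
  moreover have "f (max N N') = v" using assms by (meson max.cobounded1)
  ultimately show "w = v" by simp
qed

lemma ainf_eqI: "\<forall>n\<ge>N. x (Ja n) = v \<Longrightarrow> ainf x = v"
  unfolding ainf_def by (rule The_eventual_value)

lemma binf_eqI: "\<forall>n\<ge>N. x (Jb n) = v \<Longrightarrow> binf x = v"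
  unfolding binf_def by (rule The_eventual_value)

lemma iterJ_0 [simp]: "iterJ 0 x = x"
  unfolding iterJ_def by simp

lemma iterJ_Suc [simp]: "iterJ (Suc k) x = step1 (iterJ k x)"
  unfolding iterJ_def by simp

lemma step1_Ja_ge: "x (Ja n) \<le> step1 x (Ja n)"
  by (cases n) simp_all

lemma step1_Jb_ge: "x (Jb n) \<le> step1 x (Jb n)"
  by (cases n) simp_all

lemma antitoneJ_mono_Ja: "antitoneJ x \<Longrightarrow> mono (\<lambda>n. x (Ja n))"
  unfolding antitoneJ_def by (intro monoI) simp

lemma antitoneJ_mono_Jb: "antitoneJ x \<Longrightarrow> mono (\<lambda>n. x (Jb n))"
  unfolding antitoneJ_def by (intro monoI) simp

lemma calA_dx:
  assumes "calA x"
  shows "\<forall>n\<ge>dx x. x (Ja n) = ainf x \<and> x (Jb n) = binf x"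
proof -
  have anti: "antitoneJ x" and fin: "finite (range x)"
    using assms unfolding calA_def by auto
  have "finite (range (\<lambda>n. x (Ja n)))" by (rule finite_subset[OF _ fin]) auto
  moreover have "finite (range (\<lambda>n. x (Jb n)))" by (rule finite_subset[OF _ fin]) auto
  ultimately obtain Na Nb where Na: "\<forall>n\<ge>Na. x (Ja n) = x (Ja Na)"
    and Nb: "\<forall>n\<ge>Nb. x (Jb n) = x (Jb Nb)"
    using mono_finite_range_eventually_const[OF antitoneJ_mono_Ja[OF anti]]
      mono_finite_range_eventually_const[OF antitoneJ_mono_Jb[OF anti]] by blast
  have "x (Ja n) = ainf x \<and> x (Jb n) = binf x" if "max Na Nb \<le> n" for n
  proof -
    from that have "Na \<le> n" "Nb \<le> n" by auto
    with Na Nb have "x (Ja n) = x (Ja Na)" "x (Jb n) = x (Jb Nb)" by blast+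
    then show ?thesis by (simp add: ainf_eqI[OF Na] binf_eqI[OF Nb])
  qed
  then have "\<exists>d. \<forall>n\<ge>d. x (Ja n) = ainf x \<and> x (Jb n) = binf x"
    by blast
  then show ?thesis
    unfolding dx_def by (rule LeastI_ex)
qed

lemma calA_le_limits:
  assumes "calA x"
  shows "x (Ja n) \<le> ainf x" and "x (Jb n) \<le> binf x"
proof -
  have "antitoneJ x" using assms unfolding calA_def by simp
  then have "x (Ja n) \<le> x (Ja (max n (dx x)))" "x (Jb n) \<le> x (Jb (max n (dx x)))"
    using antitoneJ_mono_Ja antitoneJ_mono_Jb by (metis max.cobounded1 monoD)+
  with calA_dx[OF assms] show "x (Ja n) \<le> ainf x" "x (Jb n) \<le> binf x"
    by auto
qed

lemma calA_ainf_step1: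
  assumes "calA x"
  shows "ainf (step1 x) = sup (ainf x) (inf (binf x) (x Jc))"
proof (rule ainf_eqI)
  show "\<forall>n\<ge>Suc (dx x). step1 x (Ja n) = sup (ainf x) (inf (binf x) (x Jc))"
  proof (intro allI impI)
    fix n assume "Suc (dx x) \<le> n"
    then obtain m where "n = Suc m" and "dx x \<le> m" by (cases n) auto
    with calA_dx[OF assms] show "step1 x (Ja n) = sup (ainf x) (inf (binf x) (x Jc))" by simp
  qed
qed

lemma calA_binf_step1:
  assumes "calA x"
  shows "binf (step1 x) = sup (binf x) (inf (ainf x) (x Jc))"
proof (rule binf_eqI)
  show "\<forall>n\<ge>Suc (dx x). step1 x (Jb n) = sup (binf x) (inf (ainf x) (x Jc))"
  proof (intro allI impI)
    fix n assume "Suc (dx x) \<le> n"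
    then obtain m where "n = Suc m" and "dx x \<le> m" by (cases n) auto
    with calA_dx[OF assms] show "step1 x (Jb n) = sup (binf x) (inf (ainf x) (x Jc))" by simp
  qed
qed

lemma calA'_limit_inequalities:
  assumes "calA' x"
  shows "inf (binf x) (x Jc) \<le> ainf x"
    and "inf (ainf x) (x Jc) \<le> binf x"
    and "inf (ainf x) (binf x) \<le> x Jc"
proof -
  have "calA x" and "ell (step1 x) = ell x"
    using assms unfolding calA'_def by auto
  then have "sup (ainf x) (inf (binf x) (x Jc)) = ainf x"
    and "sup (binf x) (inf (ainf x) (x Jc)) = binf x"
    and "sup (x Jc) (inf (ainf x) (binf x)) = x Jc"
    unfolding ell_def by (simp_all add: calA_ainf_step1 calA_binf_step1)
  then show "inf (binf x) (x Jc) \<le> ainf x" "inf (ainf x) (x Jc) \<le> binf x"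
    "inf (ainf x) (binf x) \<le> x Jc"
    by (simp_all add: sup.absorb_iff1)
qed

definition settled :: "'a \<Rightarrow> 'a \<Rightarrow> 'a \<Rightarrow> nat \<Rightarrow> (J \<Rightarrow> 'a::order) \<Rightarrow> bool" where
  "settled \<alpha> \<beta> \<gamma> d x \<longleftrightarrow> x Jc = \<gamma> \<and> (\<forall>n. x (Ja n) \<le> \<alpha> \<and> x (Jb n) \<le> \<beta>)
     \<and> (\<forall>n\<ge>d. x (Ja n) = \<alpha> \<and> x (Jb n) = \<beta>)"

lemma calA_settled: "calA x \<Longrightarrow> settled (ainf x) (binf x) (x Jc) (dx x) x"
  unfolding settled_def using calA_dx calA_le_limits by blast

lemma settled_step1:
  fixes \<alpha> \<beta> \<gamma> :: "'a::lattice"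
  assumes "inf \<beta> \<gamma> \<le> \<alpha>" "inf \<alpha> \<gamma> \<le> \<beta>" "inf \<alpha> \<beta> \<le> \<gamma>"
    and x: "settled \<alpha> \<beta> \<gamma> d x"
  shows "settled \<alpha> \<beta> \<gamma> d (step1 x)"
proof -
  have lim: "ainf x = \<alpha>" "binf x = \<beta>"
    using x unfolding settled_def by (blast intro: ainf_eqI binf_eqI)+
  have c: "step1 x Jc = \<gamma>"
    using x assms(3) unfolding settled_def by (simp add: lim sup.absorb1)
  have xc: "x Jc = \<gamma>" and xa: "x (Ja n) \<le> \<alpha>" and xb: "x (Jb n) \<le> \<beta>" for n
    using x unfolding settled_def by auto
  have a: "step1 x (Ja n) \<le> \<alpha>" for n
  proof (cases n)
    case (Suc m)
    have "inf (x (Jb m)) (x Jc) \<le> \<alpha>"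
      using xb[of m] xc assms(1) by (metis inf_mono order.refl order_trans)
    with xa Suc show ?thesis by simp
  qed (simp add: xa)
  have b: "step1 x (Jb n) \<le> \<beta>" for n
  proof (cases n)
    case (Suc m)
    have "inf (x (Ja m)) (x Jc) \<le> \<beta>"
      using xa[of m] xc assms(2) by (metis inf_mono order.refl order_trans)
    with xb Suc show ?thesis by simp
  qed (simp add: xb)
  have "step1 x (Ja n) = \<alpha> \<and> step1 x (Jb n) = \<beta>" if "d \<le> n" for n
    using x that a[of n] b[of n] step1_Ja_ge[of x n] step1_Jb_ge[of x n]
    unfolding settled_def by (metis order.antisym)
  with a b c show ?thesis unfolding settled_def by blast
qed

lemma settled_iterJ:
  fixes \<alpha> \<beta> \<gamma> :: "'a::lattice"
  assumes "inf \<beta> \<gamma> \<le> \<alpha>" "inf \<alpha> \<gamma> \<le> \<beta>" "inf \<alpha> \<beta> \<le> \<gamma>"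
    and "settled \<alpha> \<beta> \<gamma> d x"
  shows "settled \<alpha> \<beta> \<gamma> d (iterJ k x)"
  by (induction k) (simp_all add: assms settled_step1)

lemma iterJ_stable_below:
  fixes x :: "J \<Rightarrow> 'a::lattice"
  assumes c: "\<And>k. iterJ k x Jc = x Jc" and "n \<le> k"
  shows "iterJ (Suc k) x (Ja n) = iterJ k x (Ja n) \<and> iterJ (Suc k) x (Jb n) = iterJ k x (Jb n)"
  using \<open>n \<le> k\<close>
proof (induction n arbitrary: k)
  case (Suc n)
  then obtain k' where k: "k = Suc k'" and "n \<le> k'"
    by (metis Suc_le_D Suc_le_mono)
  have step: "iterJ (Suc m) x (Ja (Suc n)) = sup (iterJ m x (Ja (Suc n))) (inf (iterJ m x (Jb n)) (x Jc))"
    "iterJ (Suc m) x (Jb (Suc n)) = sup (iterJ m x (Jb (Suc n))) (inf (iterJ m x (Ja n)) (x Jc))" for m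
    by (simp_all only: iterJ_Suc step1.simps c)
  from Suc.IH \<open>n \<le> k'\<close> k
  have "iterJ k x (Ja n) = iterJ k' x (Ja n)" "iterJ k x (Jb n) = iterJ k' x (Jb n)"
    by auto
  \<comment> \<open>the term added at index \<open>n+1\<close> in step \<open>k+1\<close> was already added in step \<open>k\<close>\<close>
  with k show ?case
    by (simp only: step sup_assoc sup_idem)
qed simp

lemma iterJ_eq_after_settled:
  fixes \<alpha> \<beta> \<gamma> :: "'a::lattice"
  assumes "inf \<beta> \<gamma> \<le> \<alpha>" "inf \<alpha> \<gamma> \<le> \<beta>" "inf \<alpha> \<beta> \<le> \<gamma>"
    and "settled \<alpha> \<beta> \<gamma> d x" and "d \<le> k"
  shows "iterJ k x = iterJ d x"
  using \<open>d \<le> k\<close>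
proof (induction k rule: dec_induct)
  case (step k)
  have s: "settled \<alpha> \<beta> \<gamma> d (iterJ m x)" for m
    using settled_iterJ[OF assms(1-4)] .
  have c: "iterJ m x Jc = x Jc" for m
    using s[of m] s[of 0] unfolding settled_def by simp
  have "iterJ (Suc k) x j = iterJ k x j" for j
  proof (cases j)
    case Jc then show ?thesis by (simp only: c)
  next
    case (Ja n) then show ?thesis
      using s[of k] s[of "Suc k"] iterJ_stable_below[OF c, of n k] \<open>d \<le> k\<close>
      unfolding settled_def by (cases "d \<le> n") auto
  next
    case (Jb n) then show ?thesis
      using s[of k] s[of "Suc k"] iterJ_stable_below[OF c, of n k] \<open>d \<le> k\<close>
      unfolding settled_def by (cases "d \<le> n") auto
  qed
  with step.IH show ?case by auto
qed simp

theorem corollary5p6: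
  fixes h k :: nat and x :: "J \<Rightarrow> 'a::bounded_lattice_bot"
  assumes "0 < h"
    and "hmodular TYPE('a) h"
    and "calA' x"
    and "dx x \<le> k"
  shows "iterJ k x = iterJ (dx x) x"
proof -
  have "calA x" using \<open>calA' x\<close> unfolding calA'_def by simp
  show ?thesis
    using calA'_limit_inequalities[OF \<open>calA' x\<close>] calA_settled[OF \<open>calA x\<close>] \<open>dx x \<le> k\<close>
    by (rule iterJ_eq_after_settled)
qed

end
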